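(* Let $q$ be a prime power and let $\Gamma$ be the set of roots in $\mathbb{F}_{q^3}$ of $X^{q^2}+X^q+X$. Then the polynomial $(X^q-X)\circ X^3=X^{3q}-X^3$ permutes $\Gamma$ (i.e. maps $\Gamma$ bijectively onto $\Gamma$) if and only if $q\equiv 2\pmod 3$. *)

theory Defs
  imports "HOL-Number_Theory.Number_Theory"
begin

end

theory Submission
  imports Defs "HOL-Computational_Algebra.Computational_Algebra" "HOL-Library.Cardinality"
begin

text \<open>In the field \<open>F\<close> with \<open>q\<^sup>3\<close> elements, \<open>\<Gamma>\<close> is the kernel of the trace
  \<open>T x = x ^ q\<^sup>2 + x ^ q + x\<close> onto the subfield \<open>F\<^sub>q\<close> of fixed points of \<open>x \<mapsto> x ^ q\<close>, and
  \<open>f x = (x\<^sup>3) ^ q - x\<^sup>3\<close> maps \<open>F\<close> into \<open>\<Gamma>\<close> because \<open>T (y ^ q - y) = 0\<close>; so \<open>f\<close> permutes the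
  finite set \<open>\<Gamma>\<close> iff it is injective on it.
  If \<open>3 dvd q\<close>, then \<open>0, 1 \<in> \<Gamma>\<close> and \<open>f 0 = f 1\<close>. If \<open>q mod 3 = 1\<close>, then \<open>F\<^sub>q\<close> contains a
  primitive cube root of unity \<open>w\<close>, and \<open>f (w x) = f x\<close> for every nonzero \<open>x \<in> \<Gamma>\<close>.
  If \<open>q mod 3 = 2\<close>, then cubing is injective on \<open>F\<close> and \<open>\<Gamma> \<inter> F\<^sub>q = 0\<close>. Every \<open>x \<in> \<Gamma>\<close>
  satisfies \<open>x\<^sup>3 = s x + n\<close> with \<open>s, n \<in> F\<^sub>q\<close>. If \<open>f x = f y\<close>, then \<open>x\<^sup>3 - y\<^sup>3 \<in> F\<^sub>q\<close>, so
  \<open>s x - s' y \<in> \<Gamma> \<inter> F\<^sub>q = 0\<close> and \<open>x = l y\<close> with \<open>l \<in> F\<^sub>q\<close>; then either \<open>l\<^sup>3 = 1\<close>, forcing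
  \<open>l = 1\<close>, or \<open>y\<^sup>3 \<in> F\<^sub>q\<close>, forcing \<open>y = 0\<close>.\<close>

lemma card_pow_eq_pow_le:
  fixes m n :: nat
  assumes "m < n"
  shows "card {x :: 'a :: idom. x ^ n = x ^ m} \<le> n"
proof -
  let ?p = "monom (1 :: 'a) n - monom 1 m"
  have "coeff ?p n = 1"
    using assms by (simp add: coeff_monom)
  then have "?p \<noteq> 0"
    by (metis coeff_0 zero_neq_one)
  moreover have "degree ?p \<le> n"
    using assms by (intro degree_diff_le) (auto intro: order.trans[OF degree_monom_le])
  moreover have "{x. x ^ n = x ^ m} = {x. poly ?p x = 0}"
    by (auto simp: poly_monom)
  ultimately show ?thesis
    using card_poly_roots_bound[of ?p] by simp
qed

lemma prime_CHAR_finite_field: "prime CHAR('a :: {field,finite})"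
  by (intro prime_CHAR_semidom finite_imp_CHAR_pos) simp

lemma power_card_minus_1_eq_1:
  fixes x :: "'a :: {field,finite}"
  assumes "x \<noteq> 0"
  shows "x ^ (CARD('a) - 1) = 1"
proof -
  let ?U = "UNIV - {0 :: 'a}"
  have "(\<Prod>y\<in>?U. x * y) = \<Prod>?U"
    by (rule prod.reindex_bij_witness[of _ "\<lambda>y. y / x" "\<lambda>y. x * y"]) (use assms in auto)
  then have "x ^ card ?U * \<Prod>?U = 1 * \<Prod>?U"
    by (simp add: prod.distrib)
  moreover have "\<Prod>?U \<noteq> 0"
    by simp
  moreover have "card ?U = CARD('a) - 1"
    by (simp add: card_Diff_singleton)
  ultimately show ?thesis
    by simp
qed

lemma power_card_eq_self: "(x :: 'a :: {field,finite}) ^ CARD('a) = x"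
proof (cases "x = 0")
  case False
  have "CARD('a) = Suc (CARD('a) - 1)"
    using finite_UNIV_card_ge_0 by fastforce
  then show ?thesis
    using power_card_minus_1_eq_1[OF False] by (metis power_Suc mult_1_right)
qed (simp add: finite_UNIV_card_ge_0)

text \<open>Cubing is inverted by the power \<open>(2 CARD('a) - 1) / 3\<close>.\<close>

lemma inj_cube_if_card_mod_3_eq_2:
  assumes "CARD('a :: {field,finite}) mod 3 = 2"
  shows "inj (\<lambda>x :: 'a. x ^ 3)"
proof -
  obtain m where m: "CARD('a) = 3 * m + 2"
    using assms by (metis mod_div_mult_eq add.commute mult.commute)
  have "(x ^ 3) ^ (2 * m + 1) = x" for x :: 'a
  proof (cases "x = 0")
    case False
    have "3 * (2 * m + 1) = (CARD('a) - 1) * 2 + 1"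
      using m by simp
    then have "(x ^ 3) ^ (2 * m + 1) = x ^ ((CARD('a) - 1) * 2 + 1)"
      by (simp only: flip: power_mult)
    also have "\<dots> = (x ^ (CARD('a) - 1)) ^ 2 * x"
      by (simp only: power_add power_mult power_one_right)
    finally show ?thesis
      using power_card_minus_1_eq_1[OF False] by simp
  qed simp
  then show ?thesis
    by (metis injI)
qed

lemma exists_cube_root_of_unity:
  assumes "CARD('a) mod 3 = 1"
  obtains w :: "'a :: {field,finite}" where "w ^ 3 = 1" "w \<noteq> 1"
proof -
  obtain m where m: "CARD('a) = 3 * m + 1"
    using assms by (metis mod_div_mult_eq add.commute mult.commute)
  have "2 \<le> CARD('a)"
    using card_mono[of UNIV "{0, 1 :: 'a}"] by simp
  then have "m > 0"
    using m by simp
  have "\<not> UNIV - {0} \<subseteq> {a :: 'a. a ^ m = a ^ 0}"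
  proof
    assume "UNIV - {0} \<subseteq> {a :: 'a. a ^ m = a ^ 0}"
    then have "card (UNIV - {0 :: 'a}) \<le> card {a :: 'a. a ^ m = a ^ 0}"
      by (intro card_mono) auto
    also have "\<dots> \<le> m"
      using \<open>m > 0\<close> by (rule card_pow_eq_pow_le)
    finally show False
      using m \<open>m > 0\<close> by (simp add: card_Diff_singleton)
  qed
  then obtain a :: 'a where a: "a \<noteq> 0" "a ^ m \<noteq> 1"
    by auto
  have "(a ^ m) ^ 3 = 1"
    using power_card_minus_1_eq_1[OF a(1)] by (simp add: m mult.commute flip: power_mult)
  with a(2) show ?thesis
    using that by blast
qed

locale cubic_extension =
  fixes q :: nat and field_type :: "'a :: {field,finite} itself"
  assumes primepow_q: "primepow q"
    and card_field: "CARD('a) = q ^ 3"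
begin

lemma q_eq_CHAR_power:
  obtains k where "k > 0" "q = CHAR('a) ^ k"
proof -
  obtain p k where p: "prime p" "k > 0" "q = p ^ k"
    using primepow_q unfolding primepow_def by blast
  have "CHAR('a) dvd p ^ (k * 3)"
    using CHAR_dvd_CARD[where 'a = 'a] by (simp add: card_field p power_mult)
  then have "CHAR('a) = p"
    using prime_CHAR_finite_field p(1) by (metis prime_dvd_power primes_dvd_imp_eq)
  then show ?thesis
    using that p by blast
qed

lemma q_gt_1: "q > 1"
  using primepow_gt_Suc_0[OF primepow_q] by simp

lemma frob_add [simp]: "(x + y) ^ q = x ^ q + y ^ q" for x y :: 'a
  by (rule q_eq_CHAR_power) (use freshmans_dream' prime_CHAR_finite_field in blast)

lemma frob_minus [simp]: "(- x) ^ q = - (x ^ q)" for x :: 'a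
proof -
  have "(- x) ^ q + x ^ q = 0"
    using frob_add[of "- x" x] q_gt_1 by (simp add: power_0_left)
  then show ?thesis
    by (simp add: eq_neg_iff_add_eq_0)
qed

lemma frob_diff [simp]: "(x - y) ^ q = x ^ q - y ^ q" for x y :: 'a
  using frob_add[of x "- y"] by simp

lemma frob_frob_frob [simp]: "((x ^ q) ^ q) ^ q = x" for x :: 'a
  using power_card_eq_self[of x] by (simp add: card_field power3_eq_cube flip: power_mult)

lemma three_eq_0_iff: "(3 :: 'a) = 0 \<longleftrightarrow> 3 dvd q"
proof -
  obtain k where k: "k > 0" "q = CHAR('a) ^ k"
    by (rule q_eq_CHAR_power)
  have "prime (3 :: nat)"
    by simp
  have "(3 :: 'a) = 0 \<longleftrightarrow> CHAR('a) dvd 3"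
    by (metis of_nat_eq_0_iff_char_dvd of_nat_numeral)
  also have "\<dots> \<longleftrightarrow> 3 dvd CHAR('a)"
    using primes_dvd_imp_eq[OF prime_CHAR_finite_field[where 'a = 'a] \<open>prime 3\<close>]
      primes_dvd_imp_eq[OF \<open>prime 3\<close> prime_CHAR_finite_field[where 'a = 'a]] by auto
  also have "\<dots> \<longleftrightarrow> 3 dvd q"
    using k \<open>prime 3\<close> by (simp add: prime_dvd_power_iff)
  finally show ?thesis .
qed

definition trace :: "'a \<Rightarrow> 'a" where
  "trace x = x ^ (q ^ 2) + x ^ q + x"

lemma trace_eq: "trace x = (x ^ q) ^ q + x ^ q + x"
  by (simp add: trace_def power2_eq_square power_mult)

lemma trace_diff: "trace (x - y) = trace x - trace y"
  by (simp add: trace_eq)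

lemma trace_fixed_mult: "c ^ q = c \<Longrightarrow> trace (c * x) = c * trace x"
  by (simp add: trace_eq power_mult_distrib algebra_simps)

lemma trace_fixed: "c ^ q = c \<Longrightarrow> trace c = 3 * c"
  by (simp add: trace_eq algebra_simps)

lemma trace_frob_diff: "trace (x ^ q - x) = 0"
  by (simp add: trace_eq)

lemma trace_eq_0_iff: "trace x = 0 \<longleftrightarrow> (x ^ q) ^ q = - x - x ^ q"
  by (simp only: trace_eq eq_diff_eq eq_neg_iff_add_eq_0)

lemma trace_kernel_fixed_eq_0:
  assumes "\<not> 3 dvd q" "trace x = 0" "x ^ q = x"
  shows "x = 0"
  using assms trace_fixed[of x] three_eq_0_iff by simp

lemma card_field_mod_3: "CARD('a) mod 3 = (q mod 3) ^ 3 mod 3"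
  by (simp add: card_field power_mod)

lemma inj_cube: "q mod 3 = 2 \<Longrightarrow> inj (\<lambda>x :: 'a. x ^ 3)"
  using card_field_mod_3 by (intro inj_cube_if_card_mod_3_eq_2) simp

lemma trace_kernel_cube_fixed_eq_0:
  assumes "q mod 3 = 2" "trace x = 0" "(x ^ 3) ^ q = x ^ 3"
  shows "x = 0"
proof -
  have "inj (\<lambda>x :: 'a. x ^ 3)"
    using assms(1) by (rule inj_cube)
  moreover have "(x ^ q) ^ 3 = x ^ 3"
    using assms(3) by (metis power_mult mult.commute)
  ultimately have "x ^ q = x"
    by (rule injD)
  moreover have "\<not> 3 dvd q"
    using assms(1) by auto
  ultimately show ?thesis
    using assms(2) trace_kernel_fixed_eq_0 by blast
qed

text \<open>Up to sign, \<open>s\<close> and \<open>n\<close> are the second and third elementary symmetric functions of the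
  conjugates \<open>x\<close>, \<open>x ^ q\<close>, \<open>x ^ q\<^sup>2 = - x - x ^ q\<close>, hence fixed by \<open>x \<mapsto> x ^ q\<close>.\<close>

lemma trace_kernel_cube:
  assumes "trace x = 0"
  obtains s n where "s ^ q = s" "n ^ q = n" "x ^ 3 = s * x + n"
proof
  define y where "y = x ^ q"
  have y: "y ^ q = - x - y"
    using assms trace_eq_0_iff y_def by blast
  show "(x * x + x * y + y * y) ^ q = x * x + x * y + y * y"
    by (simp add: power_mult_distrib y_def [symmetric] y) (simp add: algebra_simps)
  show "(- (x * y * (x + y))) ^ q = - (x * y * (x + y))"
    by (simp add: power_mult_distrib y_def [symmetric] y) (simp add: algebra_simps)
  show "x ^ 3 = (x * x + x * y + y * y) * x + - (x * y * (x + y))"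
    by (simp add: algebra_simps power3_eq_cube)
qed

lemma trace_frob_cube_diff: "trace (x ^ (3 * q) - x ^ 3) = 0"
  using trace_frob_diff[of "x ^ 3"] by (simp add: power_mult)

lemma trace_kernel_proportional_if_cube_diff_fixed:
  assumes "q mod 3 = 2" "trace x = 0" "trace y = 0" "(x ^ 3 - y ^ 3) ^ q = x ^ 3 - y ^ 3"
    and "x \<noteq> 0"
  obtains l where "l ^ q = l" "x = l * y"
proof -
  obtain s n where s: "s ^ q = s" "n ^ q = n" "x ^ 3 = s * x + n"
    using trace_kernel_cube[OF assms(2)] .
  obtain s' n' where s': "s' ^ q = s'" "n' ^ q = n'" "y ^ 3 = s' * y + n'"
    using trace_kernel_cube[OF assms(3)] .
  define u where "u = s * x - s' * y"
  have "u = (x ^ 3 - y ^ 3) - n + n'"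
    using s(3) s'(3) by (simp add: u_def)
  then have "u ^ q = u"
    using assms(4) s(2) s'(2) by simp
  moreover have "trace u = 0"
    using assms(2,3) s(1) s'(1) by (simp add: u_def trace_diff trace_fixed_mult)
  moreover have "\<not> 3 dvd q"
    using assms(1) by auto
  ultimately have "u = 0"
    using trace_kernel_fixed_eq_0 by blast
  then have sxy: "s * x = s' * y"
    by (simp add: u_def)
  have "s \<noteq> 0"
  proof
    assume "s = 0"
    then have "(x ^ 3) ^ q = x ^ 3"
      using s by simp
    then show False
      using trace_kernel_cube_fixed_eq_0 assms(1,2,5) by blast
  qed
  show ?thesis
  proof
    show "(s' / s) ^ q = s' / s"
      by (simp add: power_divide s(1) s'(1))
    show "x = s' / s * y"
      using sxy \<open>s \<noteq> 0\<close> by (simp add: field_simps)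
  qed
qed

lemma trace_kernel_eq_if_cube_diff_fixed:
  assumes "q mod 3 = 2" "trace x = 0" "trace y = 0" "(x ^ 3 - y ^ 3) ^ q = x ^ 3 - y ^ 3"
  shows "x = y"
proof (cases "x = 0")
  case True
  then have "(y ^ 3) ^ q = y ^ 3"
    using assms(4) by simp
  then show ?thesis
    using True trace_kernel_cube_fixed_eq_0 assms(1,3) by simp
next
  case False
  then obtain l where l: "l ^ q = l" "x = l * y"
    using trace_kernel_proportional_if_cube_diff_fixed assms by blast
  have diff: "x ^ 3 - y ^ 3 = (l ^ 3 - 1) * y ^ 3"
    by (simp add: l(2) power_mult_distrib algebra_simps)
  show ?thesis
  proof (cases "l ^ 3 = 1 ^ 3")
    case True
    with inj_cube[OF assms(1)] have "l = 1"
      by (rule injD)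
    then show ?thesis
      using l(2) by simp
  next
    case False
    have "(l ^ 3 - 1) ^ q = l ^ 3 - 1"
      using l(1) q_gt_1 by (simp add: power_mult[symmetric] mult.commute[of 3 q] power_mult)
    then have "(y ^ 3) ^ q = y ^ 3"
      using assms(4) False by (simp add: diff power_mult_distrib)
    then have "y = 0"
      using trace_kernel_cube_fixed_eq_0 assms(1,3) by blast
    then show ?thesis
      using l(2) by simp
  qed
qed

lemma inj_on_trace_kernel:
  assumes "q mod 3 = 2"
  shows "inj_on (\<lambda>x. x ^ (3 * q) - x ^ 3) {x. trace x = 0}"
proof (rule inj_onI)
  fix x y
  assume "x \<in> {x. trace x = 0}" "y \<in> {x. trace x = 0}"
    and eq: "x ^ (3 * q) - x ^ 3 = y ^ (3 * q) - y ^ 3"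
  have "(x ^ 3 - y ^ 3) ^ q - (x ^ 3 - y ^ 3) = (x ^ (3 * q) - x ^ 3) - (y ^ (3 * q) - y ^ 3)"
    unfolding power_mult by (simp add: algebra_simps)
  with eq have "(x ^ 3 - y ^ 3) ^ q = x ^ 3 - y ^ 3"
    by simp
  with assms \<open>x \<in> _\<close> \<open>y \<in> _\<close> show "x = y"
    using trace_kernel_eq_if_cube_diff_fixed by blast
qed

lemma not_inj_on_trace_kernel_if_3_dvd:
  assumes "3 dvd q"
  shows "\<not> inj_on (\<lambda>x. x ^ (3 * q) - x ^ 3) {x. trace x = 0}"
proof
  assume inj: "inj_on (\<lambda>x. x ^ (3 * q) - x ^ 3) {x. trace x = 0}"
  have "trace 1 = 0"
    using trace_fixed[of 1] three_eq_0_iff assms by simp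
  moreover have "trace 0 = 0"
    using trace_fixed[of 0] q_gt_1 by simp
  moreover have "(1 :: 'a) ^ (3 * q) - 1 ^ 3 = 0 ^ (3 * q) - 0 ^ 3"
    using q_gt_1 by simp
  ultimately have "(1 :: 'a) = 0"
    using inj_onD[OF inj] by blast
  then show False
    by simp
qed

lemma exists_trace_kernel_nonzero:
  obtains x where "trace x = 0" "x \<noteq> 0"
proof -
  have "q ^ 1 < q ^ 3"
    by (rule power_strict_increasing) (use q_gt_1 in auto)
  have "\<not> UNIV \<subseteq> {x :: 'a. x ^ q = x ^ 1}"
  proof
    assume "UNIV \<subseteq> {x :: 'a. x ^ q = x ^ 1}"
    then have "CARD('a) \<le> card {x :: 'a. x ^ q = x ^ 1}"
      by (intro card_mono) simp_all
    also have "\<dots> \<le> q"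
      using q_gt_1 by (intro card_pow_eq_pow_le) simp
    finally show False
      using \<open>q ^ 1 < q ^ 3\<close> card_field by simp
  qed
  then obtain z :: 'a where "z ^ q \<noteq> z"
    by auto
  then show ?thesis
    using that[of "z ^ q - z"] trace_frob_diff by simp
qed

lemma not_inj_on_trace_kernel_if_mod_3_eq_1:
  assumes "q mod 3 = 1"
  shows "\<not> inj_on (\<lambda>x. x ^ (3 * q) - x ^ 3) {x. trace x = 0}"
proof
  assume inj: "inj_on (\<lambda>x. x ^ (3 * q) - x ^ 3) {x. trace x = 0}"
  have "CARD('a) mod 3 = 1"
    using card_field_mod_3 assms by simp
  then obtain w :: 'a where w: "w ^ 3 = 1" "w \<noteq> 1"
    by (rule exists_cube_root_of_unity)
  obtain j where "q = 3 * j + 1"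
    using assms by (metis mod_div_mult_eq add.commute mult.commute)
  then have "w ^ q = w"
    using w(1) by (simp add: power_add power_mult)
  obtain x where x: "trace x = 0" "x \<noteq> 0"
    by (rule exists_trace_kernel_nonzero)
  have "trace (w * x) = 0"
    using trace_fixed_mult \<open>w ^ q = w\<close> x(1) by simp
  moreover have "(w * x) ^ (3 * q) - (w * x) ^ 3 = x ^ (3 * q) - x ^ 3"
    unfolding power_mult by (simp add: power_mult_distrib w(1))
  ultimately have "w * x = x"
    using inj_onD[OF inj] x(1) by blast
  then show False
    using w(2) x(2) by (metis mult_cancel_right1)
qed

end

theorem theorem1p7:
  fixes q :: nat
    and Gamma :: "'a::{field,finite} set"
  defines "Gamma \<equiv> {x::'a. x ^ (q ^ 2) + x ^ q + x = 0}"
  assumes "primepow q"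
    and "card (UNIV :: 'a set) = q ^ 3"
  shows "bij_betw (\<lambda>x::'a. x ^ (3 * q) - x ^ 3)
           Gamma Gamma
         \<longleftrightarrow> q mod 3 = 2"
proof -
  interpret cubic_extension q "TYPE('a)"
    by unfold_locales (use assms in simp_all)
  have Gamma: "Gamma = {x. trace x = 0}"
    unfolding Gamma_def trace_def ..
  let ?f = "\<lambda>x::'a. x ^ (3 * q) - x ^ 3"
  have "?f ` Gamma \<subseteq> Gamma"
    using trace_frob_cube_diff by (auto simp: Gamma)
  then have "bij_betw ?f Gamma Gamma \<longleftrightarrow> inj_on ?f Gamma"
    unfolding bij_betw_def using endo_inj_surj[of Gamma ?f] by auto
  also have "\<dots> \<longleftrightarrow> q mod 3 = 2"
  proof -
    have "q mod 3 < 3"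
      by simp
    then consider "q mod 3 = 0" | "q mod 3 = 1" | "q mod 3 = 2"
      by linarith
    then show ?thesis
      unfolding Gamma
      by cases (use inj_on_trace_kernel not_inj_on_trace_kernel_if_3_dvd
          not_inj_on_trace_kernel_if_mod_3_eq_1 in \<open>auto simp: dvd_eq_mod_eq_0\<close>)
  qed
  finally show ?thesis .
qed

end
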